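(* Let $n\geq 4$ and $G\in\mathcal{GAQ}_n$. (i) If $(a,b)$ is an edge of $G$, $A$ is the set of neighbors of $a$ and $B$ the set of neighbors of $b$, then $|(A\setminus\{b\})\setminus(B\setminus\{a\})|\geq 2$. (ii) If $a,b$ are distinct nonadjacent vertices of $G$ with neighbor sets $A$ and $B$ respectively, then $|A\setminus B|\geq 2$.
   Context: The $n$-dimensional augmented cube $AQ_n$ ($n\geq 1$) has vertex set all binary strings $u_1u_2\cdots u_n$. $AQ_1\cong K_2$ on vertices $0,1$. For $n\geq 2$, $AQ_n$ consists of a copy $AQ^0_{n-1}$ of $AQ_{n-1}$ with $0$ prefixed to every label and a copy $AQ^1_{n-1}$ with $1$ prefixed, plus the following edges: $0u_1\cdots u_{n-1}$ is adjacent to $1v_1\cdots v_{n-1}$ iff either $u_i=v_i$ for all $i$ (cross edge) or $u_i\neq v_i$ for all $i$ (complement edge). $AQ_n$ is $(2n-1)$-regular. Generalized augmented cubes: $\mathcal{GAQ}_4=\{AQ_4\}$; for $n\geq 5$, $\mathcal{GAQ}_n$ consists of all graphs $(V_1\cup V_2, E_1\cup E_2\cup M_1\cup M_2)$ where $(V_1,E_1),(V_2,E_2)$ are (vertex-disjoint copies of, possibly identical) graphs in $\mathcal{GAQ}_{n-1}$ and $M_1,M_2$ are edge-disjoint perfect matchings between $V_1$ and $V_2$. *)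

theory Defs
  imports Main
begin

text \<open>A graph is a pair (V, E) of a vertex set and a set of edges, each edge being
  a two-element set of vertices.\<close>
type_synonym 'a graph = "'a set \<times> 'a set set"

definition nbrs :: "'a graph \<Rightarrow> 'a \<Rightarrow> 'a set" where
  "nbrs G x = {y. {x, y} \<in> snd G}"

text \<open>Adjacency in the augmented cube on binary strings (bool lists), following the
  recursive definition: for the first letters equal, recurse into the copy; otherwise
  adjacent iff the tails are equal (cross edge) or complementary (complement edge).\<close>
fun aq_adj :: "bool list \<Rightarrow> bool list \<Rightarrow> bool" where
  "aq_adj (a # u) (b # v) = (if a = b then aq_adj u v else (v = u \<or> v = map Not u))"
| "aq_adj _ _ = False"

definition AQ :: "nat \<Rightarrow> bool list graph" where
  "AQ n = ({xs. length xs = n},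
           {{u, v} | u v. length u = n \<and> length v = n \<and> aq_adj u v})"

definition perfect_matching_between :: "'a set \<Rightarrow> 'a set \<Rightarrow> 'a set set \<Rightarrow> bool" where
  "perfect_matching_between V1 V2 M \<longleftrightarrow>
     M \<subseteq> {{x, y} | x y. x \<in> V1 \<and> y \<in> V2} \<and>
     (\<forall>v \<in> V1 \<union> V2. \<exists>!e. e \<in> M \<and> v \<in> e)"

text \<open>Generalized augmented cubes (as graphs on an arbitrary vertex type, up to isomorphism).\<close>
inductive gaq :: "nat \<Rightarrow> 'a graph \<Rightarrow> bool" where
  base: "bij_betw f (fst (AQ 4)) V \<Longrightarrow> E = (\<lambda>e. f ` e) ` snd (AQ 4) \<Longrightarrow> gaq 4 (V, E)"
| step: "gaq n (V1, E1) \<Longrightarrow> gaq n (V2, E2) \<Longrightarrow> V1 \<inter> V2 = {} \<Longrightarrow>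
         perfect_matching_between V1 V2 M1 \<Longrightarrow> perfect_matching_between V1 V2 M2 \<Longrightarrow>
         M1 \<inter> M2 = {} \<Longrightarrow> gaq (Suc n) (V1 \<union> V2, E1 \<union> E2 \<union> M1 \<union> M2)"

end

theory Submission
  imports Defs
begin

text \<open>Every graph in \<open>\<G>\<A>\<Q>\<^sub>n\<close> is a finite simple graph of minimum degree at least 4
  with both private-neighbour properties. For \<open>AQ\<^sub>4\<close> this is a finite check, preserved
  under relabelling. In the recursive step, each half \<open>H\<close> is an induced subgraph of
  the join, and a vertex outside \<open>H\<close> has at most two neighbours in \<open>H\<close> (its two matching
  partners). So for \<open>a\<close> in \<open>H\<close> and \<open>b\<close> outside, at least \<open>4 - 2\<close> of the neighbours of \<open>a\<close>
  in \<open>H\<close> are private, while for \<open>b\<close> in \<open>H\<close> the private neighbours of \<open>a\<close> within \<open>H\<close> stay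
  private in the join.\<close>

definition simple_graph :: "'a graph \<Rightarrow> bool" where
  "simple_graph G \<longleftrightarrow> finite (fst G) \<and>
     (\<forall>e\<in>snd G. \<exists>x y. e = {x, y} \<and> x \<noteq> y \<and> x \<in> fst G \<and> y \<in> fst G)"

definition min_degree :: "'a graph \<Rightarrow> nat \<Rightarrow> bool" where
  "min_degree G k \<longleftrightarrow> (\<forall>v\<in>fst G. k \<le> card (nbrs G v))"

definition private_nbrs_adj :: "'a graph \<Rightarrow> bool" where
  "private_nbrs_adj G \<longleftrightarrow>
     (\<forall>a b. {a, b} \<in> snd G \<longrightarrow> 2 \<le> card ((nbrs G a - {b}) - (nbrs G b - {a})))"

definition private_nbrs_nonadj :: "'a graph \<Rightarrow> bool" where
  "private_nbrs_nonadj G \<longleftrightarrow>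
     (\<forall>a b. a \<in> fst G \<and> b \<in> fst G \<and> a \<noteq> b \<and> {a, b} \<notin> snd G \<longrightarrow>
        2 \<le> card (nbrs G a - nbrs G b))"

lemma simple_graph_edgeD:
  "simple_graph G \<Longrightarrow> {x, y} \<in> snd G \<Longrightarrow> x \<in> fst G \<and> y \<in> fst G \<and> x \<noteq> y"
  unfolding simple_graph_def by (metis doubleton_eq_iff insert_absorb2)

lemma nbrs_subset_vertices: "simple_graph G \<Longrightarrow> nbrs G x \<subseteq> fst G"
  unfolding nbrs_def using simple_graph_edgeD by fastforce

lemma finite_nbrs: "simple_graph G \<Longrightarrow> finite (nbrs G x)"
  using nbrs_subset_vertices simple_graph_def finite_subset by metis

section \<open>Relabelling the vertices\<close>

definition graph_image :: "('a \<Rightarrow> 'b) \<Rightarrow> 'a graph \<Rightarrow> 'b graph" where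
  "graph_image f G = (f ` fst G, (`) f ` snd G)"

lemma edge_graph_imageE:
  assumes G: "simple_graph G" and ab: "{a, b} \<in> snd (graph_image f G)"
  obtains p q where "{p, q} \<in> snd G" "a = f p" "b = f q"
proof -
  from ab obtain e where e: "e \<in> snd G" "{a, b} = f ` e"
    by (auto simp: graph_image_def)
  obtain p q where "e = {p, q}"
    using G e(1) unfolding simple_graph_def by blast
  with e have pq: "{p, q} \<in> snd G" "{a, b} = {f p, f q}"
    by simp_all
  then consider "a = f p" "b = f q" | "a = f q" "b = f p"
    by (metis doubleton_eq_iff)
  then show thesis
  proof cases
    case 1
    with pq(1) show thesis by (rule that)
  next
    case 2
    from pq(1) have "{q, p} \<in> snd G" by (simp add: insert_commute)
    from this 2 show thesis by (rule that)
  qed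
qed

lemma nbrs_graph_image:
  assumes G: "simple_graph G" and inj: "inj_on f (fst G)" and x: "x \<in> fst G"
  shows "nbrs (graph_image f G) (f x) = f ` nbrs G x"
proof
  show "nbrs (graph_image f G) (f x) \<subseteq> f ` nbrs G x"
  proof
    fix y' assume "y' \<in> nbrs (graph_image f G) (f x)"
    then have "{f x, y'} \<in> snd (graph_image f G)"
      by (simp add: nbrs_def)
    then obtain p q where pq: "{p, q} \<in> snd G" "f x = f p" "y' = f q"
      by (rule edge_graph_imageE[OF G])
    have "x = p"
      using inj x simple_graph_edgeD[OF G pq(1)] pq(2) by (simp add: inj_on_eq_iff)
    with pq show "y' \<in> f ` nbrs G x" by (auto simp: nbrs_def)
  qed
  show "f ` nbrs G x \<subseteq> nbrs (graph_image f G) (f x)"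
  proof
    fix y' assume "y' \<in> f ` nbrs G x"
    then obtain y where "y' = f y" "{x, y} \<in> snd G"
      by (auto simp: nbrs_def)
    then show "y' \<in> nbrs (graph_image f G) (f x)"
      unfolding nbrs_def graph_image_def by (auto intro!: image_eqI[where x="{x, y}"])
  qed
qed

lemma card_image_diff:
  assumes "inj_on f V" "A \<subseteq> V" "B \<subseteq> V"
  shows "card (f ` A - f ` B) = card (A - B)"
proof -
  have "f ` (A - B) = f ` A - f ` B"
    using assms(2,3) by (intro inj_on_image_set_diff[OF assms(1)]) auto
  moreover have "inj_on f (A - B)"
    using assms(1) by (rule inj_on_subset) (use assms(2) in blast)
  ultimately show ?thesis
    by (metis card_image)
qed

lemma simple_graph_graph_image:
  assumes G: "simple_graph G" and inj: "inj_on f (fst G)"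
  shows "simple_graph (graph_image f G)"
  unfolding simple_graph_def
proof (intro conjI ballI)
  show "finite (fst (graph_image f G))"
    using G by (simp add: simple_graph_def graph_image_def)
next
  fix e' assume "e' \<in> snd (graph_image f G)"
  then obtain e where "e \<in> snd G" "e' = f ` e"
    by (auto simp: graph_image_def)
  moreover obtain x y where "e = {x, y}" "x \<noteq> y" "x \<in> fst G" "y \<in> fst G"
    using G calculation(1) unfolding simple_graph_def by blast
  moreover have "f x \<noteq> f y"
    using calculation inj by (simp add: inj_on_eq_iff)
  ultimately show "\<exists>x y. e' = {x, y} \<and> x \<noteq> y
      \<and> x \<in> fst (graph_image f G) \<and> y \<in> fst (graph_image f G)"
    by (auto simp: graph_image_def)
qed

lemma min_degree_graph_image:
  assumes G: "simple_graph G" and inj: "inj_on f (fst G)" and deg: "min_degree G k"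
  shows "min_degree (graph_image f G) k"
  unfolding min_degree_def
proof
  fix v assume "v \<in> fst (graph_image f G)"
  then obtain x where x: "x \<in> fst G" "v = f x"
    by (auto simp: graph_image_def)
  then have "card (nbrs (graph_image f G) v) = card (nbrs G x)"
    using nbrs_graph_image[OF G inj] nbrs_subset_vertices[OF G] inj
    by (simp add: card_image inj_on_subset)
  then show "k \<le> card (nbrs (graph_image f G) v)"
    using deg x unfolding min_degree_def by simp
qed

lemma private_nbrs_adj_graph_image:
  assumes G: "simple_graph G" and inj: "inj_on f (fst G)" and adj: "private_nbrs_adj G"
  shows "private_nbrs_adj (graph_image f G)"
  unfolding private_nbrs_adj_def
proof (intro allI impI)
  let ?N' = "nbrs (graph_image f G)" and ?N = "nbrs G"
  have sub: "\<And>x. ?N x \<subseteq> fst G"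
    using nbrs_subset_vertices[OF G] .
  have remove: "?N' (f x) - {f y} = f ` (?N x - {y})" if "x \<in> fst G" "y \<in> fst G" for x y
  proof -
    have "f ` (?N x - {y}) = f ` ?N x - f ` {y}"
      using sub that(2) by (intro inj_on_image_set_diff[OF inj]) auto
    then show ?thesis
      using nbrs_graph_image[OF G inj that(1)] by simp
  qed
  fix a b assume "{a, b} \<in> snd (graph_image f G)"
  then obtain p q where pq: "{p, q} \<in> snd G" "a = f p" "b = f q"
    by (rule edge_graph_imageE[OF G])
  then have "p \<in> fst G" "q \<in> fst G"
    using simple_graph_edgeD[OF G pq(1)] by simp_all
  then have "(?N' a - {b}) - (?N' b - {a}) = f ` (?N p - {q}) - f ` (?N q - {p})"
    using pq remove by simp
  also have "card \<dots> = card ((?N p - {q}) - (?N q - {p}))"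
    by (rule card_image_diff[OF inj]) (use sub in blast)+
  finally show "2 \<le> card ((?N' a - {b}) - (?N' b - {a}))"
    using adj pq(1) unfolding private_nbrs_adj_def by simp
qed

lemma private_nbrs_nonadj_graph_image:
  assumes G: "simple_graph G" and inj: "inj_on f (fst G)" and nonadj: "private_nbrs_nonadj G"
  shows "private_nbrs_nonadj (graph_image f G)"
  unfolding private_nbrs_nonadj_def
proof (intro allI impI)
  fix a b
  assume ab: "a \<in> fst (graph_image f G) \<and> b \<in> fst (graph_image f G) \<and> a \<noteq> b
    \<and> {a, b} \<notin> snd (graph_image f G)"
  then obtain x y where xy: "x \<in> fst G" "y \<in> fst G" "a = f x" "b = f y"
    by (auto simp: graph_image_def)
  with ab have "x \<noteq> y" "{x, y} \<notin> snd G"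
    by (auto simp: graph_image_def image_iff)
  then have "2 \<le> card (nbrs G x - nbrs G y)"
    using nonadj xy unfolding private_nbrs_nonadj_def by blast
  then show "2 \<le> card (nbrs (graph_image f G) a - nbrs (graph_image f G) b)"
    using xy nbrs_subset_vertices[OF G]
    by (simp add: nbrs_graph_image[OF G inj] card_image_diff[OF inj])
qed

section \<open>Augmented cubes\<close>

lemma aq_adj_sym: "aq_adj u v \<Longrightarrow> aq_adj v u"
  by (induction u v rule: aq_adj.induct) (auto simp: comp_def)

lemma aq_adj_length: "aq_adj u v \<Longrightarrow> length u = length v"
  by (induction u v rule: aq_adj.induct) (auto split: if_splits)

lemma aq_adj_irrefl: "\<not> aq_adj u u"
  by (induction u) auto

lemma AQ_vertices: "fst (AQ n) = set (List.n_lists n [False, True])"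
  by (simp add: AQ_def set_n_lists UNIV_bool[symmetric])

lemma simple_graph_AQ: "simple_graph (AQ n)"
  unfolding simple_graph_def
proof
  show "finite (fst (AQ n))"
    by (simp add: AQ_vertices)
  show "\<forall>e\<in>snd (AQ n). \<exists>x y. e = {x, y} \<and> x \<noteq> y \<and> x \<in> fst (AQ n) \<and> y \<in> fst (AQ n)"
    by (auto simp: AQ_def) (metis aq_adj_irrefl)
qed

lemma nbrs_AQ: "length u = n \<Longrightarrow> nbrs (AQ n) u = {v \<in> fst (AQ n). aq_adj u v}"
  by (auto simp: nbrs_def AQ_def doubleton_eq_iff dest: aq_adj_sym aq_adj_length)

lemma edge_AQ: "{a, b} \<in> snd (AQ n) \<longleftrightarrow> length a = n \<and> length b = n \<and> aq_adj a b"
  by (auto simp: AQ_def doubleton_eq_iff dest: aq_adj_sym)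

definition AQ4_vertex_list :: "bool list list" where
  "AQ4_vertex_list = List.n_lists 4 [False, True]"

definition AQ4_nbr_list :: "bool list \<Rightarrow> bool list list" where
  "AQ4_nbr_list u = filter (aq_adj u) AQ4_vertex_list"

lemma AQ4_vertices: "fst (AQ 4) = set AQ4_vertex_list"
  by (simp add: AQ_vertices AQ4_vertex_list_def)

lemma AQ4_nbrs:
  assumes "u \<in> fst (AQ 4)"
  shows "nbrs (AQ 4) u = set (AQ4_nbr_list u)"
proof -
  from assms have "length u = 4" by (simp add: AQ_def)
  then show ?thesis by (simp add: nbrs_AQ AQ4_vertices AQ4_nbr_list_def)
qed

lemma AQ4_min_degree_check:
  "\<forall>u\<in>set AQ4_vertex_list. 4 \<le> card (set (AQ4_nbr_list u))"
  by code_simp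

lemma AQ4_private_nbrs_adj_check:
  "\<forall>a\<in>set AQ4_vertex_list. \<forall>b\<in>set AQ4_vertex_list. aq_adj a b \<longrightarrow>
     2 \<le> card ((set (AQ4_nbr_list a) - {b}) - (set (AQ4_nbr_list b) - {a}))"
  by code_simp

lemma AQ4_private_nbrs_nonadj_check:
  "\<forall>a\<in>set AQ4_vertex_list. \<forall>b\<in>set AQ4_vertex_list. a \<noteq> b \<and> \<not> aq_adj a b \<longrightarrow>
     2 \<le> card (set (AQ4_nbr_list a) - set (AQ4_nbr_list b))"
  by code_simp

lemma AQ4_invariants:
  "simple_graph (AQ 4) \<and> min_degree (AQ 4) 4
    \<and> private_nbrs_adj (AQ 4) \<and> private_nbrs_nonadj (AQ 4)"
proof (intro conjI simple_graph_AQ)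
  show "min_degree (AQ 4) 4"
    using AQ4_min_degree_check by (simp add: min_degree_def AQ4_nbrs AQ4_vertices)
  show "private_nbrs_adj (AQ 4)"
    unfolding private_nbrs_adj_def
  proof (intro allI impI)
    fix a b assume ab: "{a, b} \<in> snd (AQ 4)"
    then have "a \<in> fst (AQ 4)" "b \<in> fst (AQ 4)"
      using simple_graph_edgeD[OF simple_graph_AQ] by blast+
    moreover from ab have "aq_adj a b" by (simp add: edge_AQ)
    ultimately show "2 \<le> card ((nbrs (AQ 4) a - {b}) - (nbrs (AQ 4) b - {a}))"
      using AQ4_private_nbrs_adj_check by (simp add: AQ4_nbrs AQ4_vertices)
  qed
  show "private_nbrs_nonadj (AQ 4)"
    unfolding private_nbrs_nonadj_def
  proof (intro allI impI)
    fix a b assume ab: "a \<in> fst (AQ 4) \<and> b \<in> fst (AQ 4) \<and> a \<noteq> b \<and> {a, b} \<notin> snd (AQ 4)"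
    then have "\<not> aq_adj a b"
      by (auto simp: edge_AQ AQ_def)
    then show "2 \<le> card (nbrs (AQ 4) a - nbrs (AQ 4) b)"
      using ab AQ4_private_nbrs_nonadj_check by (simp add: AQ4_nbrs AQ4_vertices)
  qed
qed

section \<open>Sparsely attached induced subgraphs\<close>

definition sparsely_attached :: "'a graph \<Rightarrow> 'a graph \<Rightarrow> bool" where
  "sparsely_attached H G \<longleftrightarrow> fst H \<subseteq> fst G
     \<and> (\<forall>x\<in>fst H. nbrs G x \<inter> fst H = nbrs H x)
     \<and> (\<forall>y\<in>fst G - fst H. \<exists>p q. nbrs G y \<inter> fst H \<subseteq> {p, q})"

lemma sparsely_attached_nbrs_subset:
  "sparsely_attached H G \<Longrightarrow> a \<in> fst H \<Longrightarrow> nbrs H a \<subseteq> nbrs G a \<inter> fst H"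
  unfolding sparsely_attached_def by blast

lemma private_nbrs_outside_sparsely_attached:
  assumes att: "sparsely_attached H G" and G: "simple_graph G"
    and a: "a \<in> fst H" and b: "b \<in> fst G - fst H" and deg: "4 \<le> card (nbrs H a)"
  shows "2 \<le> card (nbrs H a - nbrs G b)"
proof -
  obtain p q where pq: "nbrs G b \<inter> fst H \<subseteq> {p, q}"
    using att b unfolding sparsely_attached_def by blast
  have sub: "nbrs H a \<subseteq> nbrs G a \<inter> fst H"
    using sparsely_attached_nbrs_subset[OF att a] .
  then have fin: "finite (nbrs H a)"
    using finite_nbrs[OF G] finite_subset by blast
  have "card (nbrs H a) - card {p, q} \<le> card (nbrs H a - {p, q})"
    by (rule diff_card_le_card_Diff) simp
  moreover have "card {p, q} \<le> 2"
    by (cases "p = q") simp_all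
  moreover have "nbrs H a - {p, q} \<subseteq> nbrs H a - nbrs G b"
    using pq sub by blast
  then have "card (nbrs H a - {p, q}) \<le> card (nbrs H a - nbrs G b)"
    using fin by (intro card_mono) simp_all
  ultimately show ?thesis
    using deg by linarith
qed

lemma private_nbrs_adj_sparsely_attached:
  assumes att: "sparsely_attached H G" and G: "simple_graph G"
    and deg: "min_degree H 4" and adj: "private_nbrs_adj H"
    and a: "a \<in> fst H" and ab: "{a, b} \<in> snd G"
  shows "2 \<le> card ((nbrs G a - {b}) - (nbrs G b - {a}))"
proof -
  have fin: "finite ((nbrs G a - {b}) - (nbrs G b - {a}))"
    using finite_nbrs[OF G] by simp
  have sub: "nbrs H a \<subseteq> nbrs G a \<inter> fst H"
    using sparsely_attached_nbrs_subset[OF att a] .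
  show ?thesis
  proof (cases "b \<in> fst H")
    case True
    have "b \<in> nbrs G a \<inter> fst H"
      using ab True by (simp add: nbrs_def)
    then have "b \<in> nbrs H a"
      using att a unfolding sparsely_attached_def by blast
    then have "{a, b} \<in> snd H"
      by (simp add: nbrs_def)
    then have "2 \<le> card ((nbrs H a - {b}) - (nbrs H b - {a}))"
      using adj unfolding private_nbrs_adj_def by blast
    moreover have "(nbrs H a - {b}) - (nbrs H b - {a}) \<subseteq> (nbrs G a - {b}) - (nbrs G b - {a})"
      using att True sub unfolding sparsely_attached_def by blast
    ultimately show ?thesis
      using card_mono[OF fin] by (meson le_trans)
  next
    case False
    then have "b \<in> fst G - fst H"
      using simple_graph_edgeD[OF G ab] by simp
    then have "2 \<le> card (nbrs H a - nbrs G b)"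
      using private_nbrs_outside_sparsely_attached[OF att G a] deg a
      unfolding min_degree_def by blast
    moreover have "nbrs H a - nbrs G b \<subseteq> (nbrs G a - {b}) - (nbrs G b - {a})"
      using False sub by blast
    ultimately show ?thesis
      using card_mono[OF fin] by (meson le_trans)
  qed
qed

lemma private_nbrs_nonadj_sparsely_attached:
  assumes att: "sparsely_attached H G" and G: "simple_graph G"
    and deg: "min_degree H 4" and nonadj: "private_nbrs_nonadj H"
    and a: "a \<in> fst H" and b: "b \<in> fst G" "b \<noteq> a" and ab: "{a, b} \<notin> snd G"
  shows "2 \<le> card (nbrs G a - nbrs G b)"
proof -
  have fin: "finite (nbrs G a - nbrs G b)"
    using finite_nbrs[OF G] by simp
  have sub: "nbrs H a \<subseteq> nbrs G a \<inter> fst H"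
    using sparsely_attached_nbrs_subset[OF att a] .
  show ?thesis
  proof (cases "b \<in> fst H")
    case True
    have "{a, b} \<notin> snd H"
      using ab sub by (auto simp: nbrs_def)
    then have "2 \<le> card (nbrs H a - nbrs H b)"
      using nonadj a b True unfolding private_nbrs_nonadj_def by blast
    moreover have "nbrs H a - nbrs H b \<subseteq> nbrs G a - nbrs G b"
      using att True sub unfolding sparsely_attached_def by blast
    ultimately show ?thesis
      using card_mono[OF fin] by (meson le_trans)
  next
    case False
    then have "2 \<le> card (nbrs H a - nbrs G b)"
      using private_nbrs_outside_sparsely_attached[OF att G a] deg a b
      unfolding min_degree_def by blast
    moreover have "nbrs H a - nbrs G b \<subseteq> nbrs G a - nbrs G b"
      using sub by blast
    ultimately show ?thesis
      using card_mono[OF fin] by (meson le_trans)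
  qed
qed

lemma invariants_if_covered_by_sparsely_attached:
  assumes G: "simple_graph G"
    and cover: "\<And>a. a \<in> fst G \<Longrightarrow> \<exists>H. a \<in> fst H \<and> sparsely_attached H G
      \<and> min_degree H 4 \<and> private_nbrs_adj H \<and> private_nbrs_nonadj H"
  shows "min_degree G 4 \<and> private_nbrs_adj G \<and> private_nbrs_nonadj G"
proof (intro conjI)
  show "min_degree G 4"
    unfolding min_degree_def
  proof
    fix a assume "a \<in> fst G"
    then obtain H where H: "a \<in> fst H" "sparsely_attached H G" "min_degree H 4"
      using cover by blast
    have "nbrs H a \<subseteq> nbrs G a"
      using sparsely_attached_nbrs_subset[OF H(2,1)] by blast
    then have "card (nbrs H a) \<le> card (nbrs G a)"
      using finite_nbrs[OF G] by (rule card_mono[rotated])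
    then show "4 \<le> card (nbrs G a)"
      using H unfolding min_degree_def by fastforce
  qed
  show "private_nbrs_adj G"
    unfolding private_nbrs_adj_def
  proof (intro allI impI)
    fix a b assume ab: "{a, b} \<in> snd G"
    then have "a \<in> fst G"
      using simple_graph_edgeD[OF G] by blast
    then obtain H where H: "a \<in> fst H" "sparsely_attached H G" "min_degree H 4" "private_nbrs_adj H"
      using cover by blast
    show "2 \<le> card ((nbrs G a - {b}) - (nbrs G b - {a}))"
      by (rule private_nbrs_adj_sparsely_attached[OF H(2) G H(3,4,1) ab])
  qed
  show "private_nbrs_nonadj G"
    unfolding private_nbrs_nonadj_def
  proof (intro allI impI)
    fix a b assume ab: "a \<in> fst G \<and> b \<in> fst G \<and> a \<noteq> b \<and> {a, b} \<notin> snd G"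
    then obtain H where H: "a \<in> fst H" "sparsely_attached H G" "min_degree H 4" "private_nbrs_nonadj H"
      using cover by blast
    show "2 \<le> card (nbrs G a - nbrs G b)"
      using ab by (intro private_nbrs_nonadj_sparsely_attached[OF H(2) G H(3,4,1)]) auto
  qed
qed

section \<open>Joining two graphs by perfect matchings\<close>

lemma perfect_matching_betweenE:
  assumes "perfect_matching_between V1 V2 M" and "e \<in> M"
  obtains x y where "e = {x, y}" "x \<in> V1" "y \<in> V2"
proof -
  have "e \<in> {{x, y} | x y. x \<in> V1 \<and> y \<in> V2}"
    using assms unfolding perfect_matching_between_def by blast
  then show thesis
    using that by blast
qed

lemma perfect_matching_between_edgeD:
  assumes "perfect_matching_between V1 V2 M" and "{x, y} \<in> M"
  shows "x \<in> V1 \<and> y \<in> V2 \<or> x \<in> V2 \<and> y \<in> V1"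
proof -
  obtain p q where "{x, y} = {p, q}" "p \<in> V1" "q \<in> V2"
    using assms by (rule perfect_matching_betweenE)
  then show ?thesis
    by (auto simp: doubleton_eq_iff)
qed

lemma perfect_matching_between_commute:
  assumes M: "perfect_matching_between V1 V2 M"
  shows "perfect_matching_between V2 V1 M"
proof -
  have "M \<subseteq> {{x, y} | x y. x \<in> V2 \<and> y \<in> V1}"
  proof
    fix e assume "e \<in> M"
    then obtain x y where "e = {x, y}" "x \<in> V1" "y \<in> V2"
      using M by (elim perfect_matching_betweenE)
    then show "e \<in> {{x, y} | x y. x \<in> V2 \<and> y \<in> V1}"
      by (auto simp: insert_commute)
  qed
  then show ?thesis
    using M unfolding perfect_matching_between_def by (simp add: Un_commute)
qed

lemma perfect_matching_between_partner:
  assumes M: "perfect_matching_between V1 V2 M"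
  shows "\<exists>p. {y. {x, y} \<in> M} \<subseteq> {p}"
proof (cases "\<exists>y0. {x, y0} \<in> M")
  case True
  then obtain y0 where y0: "{x, y0} \<in> M" ..
  then have "x \<in> V1 \<union> V2"
    using perfect_matching_between_edgeD[OF M] by blast
  then have "\<exists>!e. e \<in> M \<and> x \<in> e"
    using M unfolding perfect_matching_between_def by blast
  with y0 have "{x, y} = {x, y0}" if "{x, y} \<in> M" for y
    using that by blast
  then have "{y. {x, y} \<in> M} \<subseteq> {y0}"
    by (auto simp: doubleton_eq_iff)
  then show ?thesis ..
qed simp

lemma simple_graph_join:
  assumes G1: "simple_graph (V1, E1)" and G2: "simple_graph (V2, E2)" and disj: "V1 \<inter> V2 = {}"
    and M1: "perfect_matching_between V1 V2 M1" and M2: "perfect_matching_between V1 V2 M2"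
  shows "simple_graph (V1 \<union> V2, E1 \<union> E2 \<union> M1 \<union> M2)"
  unfolding simple_graph_def fst_conv snd_conv
proof (intro conjI ballI)
  show "finite (V1 \<union> V2)"
    using G1 G2 by (simp add: simple_graph_def)
  have part: "\<exists>x y. e = {x, y} \<and> x \<noteq> y \<and> x \<in> V1 \<union> V2 \<and> y \<in> V1 \<union> V2"
    if G: "simple_graph (V, E)" and V: "V \<subseteq> V1 \<union> V2" and e: "e \<in> E" for V E e
  proof -
    obtain x y where "e = {x, y}" "x \<noteq> y" "x \<in> V" "y \<in> V"
      using G e unfolding simple_graph_def fst_conv snd_conv by blast
    with V show ?thesis by blast
  qed
  have cross: "\<exists>x y. e = {x, y} \<and> x \<noteq> y \<and> x \<in> V1 \<union> V2 \<and> y \<in> V1 \<union> V2"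
    if M: "perfect_matching_between V1 V2 M" and e: "e \<in> M" for M e
  proof -
    obtain x y where "e = {x, y}" "x \<in> V1" "y \<in> V2"
      using M e by (rule perfect_matching_betweenE)
    with disj show ?thesis by blast
  qed
  fix e assume "e \<in> E1 \<union> E2 \<union> M1 \<union> M2"
  then consider "e \<in> E1" | "e \<in> E2" | "e \<in> M1" | "e \<in> M2"
    by blast
  then show "\<exists>x y. e = {x, y} \<and> x \<noteq> y \<and> x \<in> V1 \<union> V2 \<and> y \<in> V1 \<union> V2"
  proof cases
    case 1 with G1 show ?thesis by (intro part) auto
  next
    case 2 with G2 show ?thesis by (intro part) auto
  next
    case 3 with M1 show ?thesis by (rule cross)
  next
    case 4 with M2 show ?thesis by (rule cross)
  qed
qed

lemma sparsely_attached_join: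
  assumes G1: "simple_graph (V1, E1)" and G2: "simple_graph (V2, E2)" and disj: "V1 \<inter> V2 = {}"
    and M1: "perfect_matching_between V1 V2 M1" and M2: "perfect_matching_between V1 V2 M2"
  shows "sparsely_attached (V1, E1) (V1 \<union> V2, E1 \<union> E2 \<union> M1 \<union> M2)"
proof -
  let ?G = "(V1 \<union> V2, E1 \<union> E2 \<union> M1 \<union> M2)"
  let ?P = "\<lambda>M x. {y. {x, y} \<in> M}"
  have nbrs_G: "nbrs ?G x = nbrs (V1, E1) x \<union> nbrs (V2, E2) x \<union> ?P M1 x \<union> ?P M2 x" for x
    by (auto simp: nbrs_def)
  have sub1: "nbrs (V1, E1) x \<subseteq> V1" and sub2: "nbrs (V2, E2) x \<subseteq> V2" for x
    using nbrs_subset_vertices[OF G1] nbrs_subset_vertices[OF G2] by simp_all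
  have no1: "nbrs (V1, E1) y = {}" if "y \<notin> V1" for y
    using simple_graph_edgeD[OF G1] that by (auto simp: nbrs_def)
  have no2: "nbrs (V2, E2) x = {}" if "x \<notin> V2" for x
    using simple_graph_edgeD[OF G2] that by (auto simp: nbrs_def)
  have cross: "?P M1 x \<union> ?P M2 x \<subseteq> V2" if "x \<in> V1" for x
    using perfect_matching_between_edgeD[OF M1] perfect_matching_between_edgeD[OF M2] that disj
    by blast
  have "nbrs ?G x \<inter> V1 = nbrs (V1, E1) x" if "x \<in> V1" for x
    using nbrs_G[of x] sub1[of x] no2[of x] cross[OF that] that disj by blast
  moreover have "\<exists>p q. nbrs ?G y \<inter> V1 \<subseteq> {p, q}" if "y \<in> V2" for y
  proof -
    obtain p where "?P M1 y \<subseteq> {p}"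
      using perfect_matching_between_partner[OF M1] by blast
    moreover obtain q where "?P M2 y \<subseteq> {q}"
      using perfect_matching_between_partner[OF M2] by blast
    moreover have "y \<notin> V1"
      using that disj by blast
    ultimately have "nbrs ?G y \<inter> V1 \<subseteq> {p, q}"
      using nbrs_G[of y] sub2[of y] no1[of y] disj by blast
    then show ?thesis by blast
  qed
  ultimately show ?thesis
    unfolding sparsely_attached_def by auto
qed

section \<open>Generalized augmented cubes\<close>

lemma gaq_invariants:
  "gaq n G \<Longrightarrow> simple_graph G \<and> min_degree G 4 \<and> private_nbrs_adj G \<and> private_nbrs_nonadj G"
proof (induction rule: gaq.induct)
  case (base f V E)
  then have "(V, E) = graph_image f (AQ 4)" and "inj_on f (fst (AQ 4))"
    by (simp_all add: graph_image_def bij_betw_def)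
  then show ?case
    using AQ4_invariants simple_graph_graph_image min_degree_graph_image
      private_nbrs_adj_graph_image private_nbrs_nonadj_graph_image by metis
next
  case (step n V1 E1 V2 E2 M1 M2)
  let ?G = "(V1 \<union> V2, E1 \<union> E2 \<union> M1 \<union> M2)"
  have "?G = (V2 \<union> V1, E2 \<union> E1 \<union> M1 \<union> M2)"
    by auto
  moreover have "V2 \<inter> V1 = {}"
    using step.hyps(3) by blast
  ultimately have att: "sparsely_attached (V1, E1) ?G" "sparsely_attached (V2, E2) ?G"
    using step sparsely_attached_join perfect_matching_between_commute by metis+
  have G: "simple_graph ?G"
    using step by (intro simple_graph_join) simp_all
  moreover have "min_degree ?G 4 \<and> private_nbrs_adj ?G \<and> private_nbrs_nonadj ?G"
  proof (rule invariants_if_covered_by_sparsely_attached[OF G])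
    fix a assume "a \<in> fst ?G"
    then show "\<exists>H. a \<in> fst H \<and> sparsely_attached H ?G
        \<and> min_degree H 4 \<and> private_nbrs_adj H \<and> private_nbrs_nonadj H"
      using att step.IH by (metis UnE fst_conv)
  qed
  ultimately show ?case
    by blast
qed

text \<open>The hypothesis \<open>n \<ge> 4\<close> is redundant (\<open>gaq n G\<close> forces it), and the argument
  never uses that the two matchings in a recursive step are disjoint.\<close>

theorem lemma3p3:
  fixes G :: "'a graph" and n :: nat
  assumes "n \<ge> 4" and "gaq n G"
  shows "(\<forall>a b. {a, b} \<in> snd G \<longrightarrow>
             card ((nbrs G a - {b}) - (nbrs G b - {a})) \<ge> 2)
       \<and> (\<forall>a b. a \<in> fst G \<and> b \<in> fst G \<and> a \<noteq> b \<and> {a, b} \<notin> snd G \<longrightarrow>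
             card (nbrs G a - nbrs G b) \<ge> 2)"
  using gaq_invariants[OF assms(2)]
  unfolding private_nbrs_adj_def private_nbrs_nonadj_def by blast

end
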